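(* For every $\epsilon>0$ there exists $n_0$ such that for all $n\ge n_0$, $d_n \ge (1-\epsilon)\, n\, 2^{2^{n-1}}$.
   Context: A delta-matroid $(E,\mathcal F)$ consists of a finite ground set $E$ and a non-empty collection $\mathcal F$ of subsets of $E$ (the feasible sets) satisfying the symmetric exchange axiom: for all $X,Y\in\mathcal F$ and every $e\in X\triangle Y$ there exists $f\in X\triangle Y$ (possibly $f=e$) with $X\triangle\{e,f\}\in\mathcal F$. Let $d_n$ denote the number of labelled delta-matroids with ground set $[n]=\{1,\dots,n\}$, i.e. the number of collections $\mathcal F$ of subsets of $[n]$ such that $([n],\mathcal F)$ is a delta-matroid. *)

theory Defs
  imports Complex_Main
begin

definition symdiff :: "'a set \<Rightarrow> 'a set \<Rightarrow> 'a set" where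
  "symdiff A B = (A - B) \<union> (B - A)"

definition delta_matroid :: "'a set \<Rightarrow> 'a set set \<Rightarrow> bool" where
  "delta_matroid E F \<longleftrightarrow> finite E \<and> F \<noteq> {} \<and> (\<forall>X\<in>F. X \<subseteq> E) \<and>
     (\<forall>X\<in>F. \<forall>Y\<in>F. \<forall>e\<in>symdiff X Y. \<exists>f\<in>symdiff X Y. symdiff X {e, f} \<in> F)"

definition num_delta_matroids :: "nat \<Rightarrow> nat" where
  "num_delta_matroids n = card {F. F \<subseteq> Pow {1..n} \<and> delta_matroid {1..n} F}"

end

theory Submission
  imports Defs
begin

text \<open>Fix a point \<open>a\<close> of the ground set \<open>E\<close> and let \<open>C\<close> be the family of those \<open>X \<subseteq> E\<close> for
  which \<open>|X - {a}|\<close> is even. Every family \<open>F\<close> with \<open>C \<subseteq> F \<subseteq> Pow E\<close> is a delta-matroid: given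
  \<open>X, Y \<in> F\<close> and \<open>e \<in> X \<triangle> Y\<close>, either \<open>X \<triangle> Y \<subseteq> {e, a}\<close> and the exchange can jump straight to \<open>Y\<close>,
  or some \<open>f \<in> X \<triangle> Y\<close> outside \<open>{e, a}\<close> exists and one of \<open>X \<triangle> {e}\<close>, \<open>X \<triangle> {e, f}\<close> lies in \<open>C\<close>.
  If \<open>|E| = n\<close>, the complement of \<open>C\<close> in \<open>Pow E\<close> has \<open>2^(n-1)\<close> elements, so each \<open>a\<close> yields
  \<open>2^2^(n-1)\<close> delta-matroids, while for \<open>a \<noteq> b\<close> only \<open>2^2^(n-2)\<close> of them are shared. Bonferroni's
  inequality gives at least \<open>n (2^2^(n-1) - (n-1) 2^2^(n-2))\<close> delta-matroids, and the subtracted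
  term is negligible because \<open>(n-1)\<^sup>2 \<le> 2^2^(n-2)\<close>.\<close>

lemma symdiff_singleton: "symdiff S {x} = (if x \<in> S then S - {x} else insert x S)"
  by (auto simp: symdiff_def)

lemma symdiff_symdiff_cancel: "symdiff X (symdiff X Y) = Y"
  by (auto simp: symdiff_def)

lemma symdiff_singleton_twice: "symdiff (symdiff X {b}) {b} = X"
  by (auto simp: symdiff_def)

lemma symdiff_insert_distinct: "e \<noteq> f \<Longrightarrow> symdiff X {e, f} = symdiff (symdiff X {e}) {f}"
  by (auto simp: symdiff_def)

lemma symdiff_singleton_Diff: "b \<noteq> a \<Longrightarrow> symdiff X {b} - {a} = symdiff (X - {a}) {b}"
  by (auto simp: symdiff_def)

lemma symdiff_subset: "X \<subseteq> E \<Longrightarrow> T \<subseteq> E \<Longrightarrow> symdiff X T \<subseteq> E"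
  by (auto simp: symdiff_def)

lemma inj_on_symdiff_singleton: "inj_on (\<lambda>X. symdiff X {b}) S"
  by (rule inj_onI) (metis symdiff_singleton_twice)

lemma even_card_symdiff_singleton:
  assumes "finite S"
  shows "even (card (symdiff S {x})) \<longleftrightarrow> odd (card S)"
proof (cases "x \<in> S")
  case True
  then have "card S > 0" using assms card_gt_0_iff by blast
  then show ?thesis using True assms by (cases "card S") (auto simp: symdiff_singleton)
qed (use assms in \<open>simp add: symdiff_singleton\<close>)

lemma even_card_symdiff_singleton_Diff:
  assumes "finite X" "b \<noteq> a"
  shows "even (card (symdiff X {b} - {a})) \<longleftrightarrow> odd (card (X - {a}))"
  using assms by (simp add: symdiff_singleton_Diff even_card_symdiff_singleton)

definition even_outside :: "'a set \<Rightarrow> 'a \<Rightarrow> 'a set set" where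
  "even_outside E a = {X. X \<subseteq> E \<and> even (card (X - {a}))}"

definition odd_outside :: "'a set \<Rightarrow> 'a \<Rightarrow> 'a set set" where
  "odd_outside E a = {X. X \<subseteq> E \<and> odd (card (X - {a}))}"

lemma Pow_diff_even_outside: "Pow E - even_outside E a = odd_outside E a"
  by (auto simp: even_outside_def odd_outside_def)

lemma even_outside_subset_Pow: "even_outside E a \<subseteq> Pow E"
  by (auto simp: even_outside_def)

lemma odd_outside_subset_Pow: "odd_outside E a \<subseteq> Pow E"
  by (auto simp: odd_outside_def)

lemma delta_matroid_if_even_outside_subset:
  assumes "finite E" "even_outside E a \<subseteq> F" "F \<subseteq> Pow E"
  shows "delta_matroid E F"
  unfolding delta_matroid_def
proof (intro conjI ballI)
  show "F \<noteq> {}" using assms(2) by (auto simp: even_outside_def)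
next
  fix X Y e assume X: "X \<in> F" and Y: "Y \<in> F" and e: "e \<in> symdiff X Y"
  have XE: "X \<subseteq> E" and "Y \<subseteq> E" using X Y assms(3) by auto
  then have XYE: "symdiff X Y \<subseteq> E" by (rule symdiff_subset)
  have toggle_in_F: "symdiff X T \<in> F"
    if "T \<subseteq> symdiff X Y" "even (card (symdiff X T - {a}))" for T
  proof -
    have "symdiff X T \<subseteq> E" using symdiff_subset[OF XE] that(1) XYE by blast
    then show ?thesis using that(2) assms(2) by (auto simp: even_outside_def)
  qed
  show "\<exists>f\<in>symdiff X Y. symdiff X {e, f} \<in> F"
  proof (cases "symdiff X Y \<subseteq> {e, a}")
    case True
    define f where "f = (if a \<in> symdiff X Y then a else e)"
    have "symdiff X Y = {e, f}" using True e by (auto simp: f_def)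
    then show ?thesis using Y by (metis insertCI symdiff_symdiff_cancel)
  next
    case False
    then obtain f where f: "f \<in> symdiff X Y" "f \<noteq> e" "f \<noteq> a" by blast
    have "finite (symdiff X {e})" using XE assms(1) by (auto simp: symdiff_def intro: finite_subset)
    \<comment> \<open>toggling \<open>f\<close> flips the parity outside \<open>a\<close>\<close>
    then have "even (card (symdiff X {e} - {a})) \<or> even (card (symdiff X {e, f} - {a}))"
      using even_card_symdiff_singleton_Diff[OF _ f(3)] symdiff_insert_distinct[of e f X] f(2) by auto
    then show ?thesis
    proof
      assume "even (card (symdiff X {e} - {a}))"
      then show ?thesis using toggle_in_F[of "{e}"] e by (intro bexI[of _ e]) auto
    next
      assume "even (card (symdiff X {e, f} - {a}))"
      then show ?thesis using toggle_in_F[of "{e, f}"] e f(1) by (intro bexI[of _ f]) auto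
    qed
  qed
qed (use assms in auto)

lemma card_supersets_within:
  assumes "finite P" "A \<subseteq> P"
  shows "card {F. A \<subseteq> F \<and> F \<subseteq> P} = 2 ^ card (P - A)"
proof -
  have "{F. A \<subseteq> F \<and> F \<subseteq> P} = (\<union>) A ` Pow (P - A)"
    using assms(2) by (auto intro!: image_eqI[where x = "_ - A"])
  moreover have "inj_on ((\<union>) A) (Pow (P - A))" by (rule inj_onI) blast
  ultimately show ?thesis using assms(1) by (simp add: card_image card_Pow)
qed

lemma double_card_le_if_inj_into_Diff:
  assumes "finite S" "A \<subseteq> S" "inj_on f A" "f ` A \<subseteq> S - A"
  shows "2 * card A \<le> card S"
proof -
  have "card A = card (f ` A)" using assms(3) by (simp add: card_image)
  also have "\<dots> \<le> card (S - A)" using assms(1,4) by (simp add: card_mono)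
  also have "\<dots> = card S - card A" using assms(1,2) by (simp add: card_Diff_subset finite_subset)
  finally show ?thesis by linarith
qed

lemma card_odd_outside:
  assumes "finite E" "2 \<le> card E"
  shows "card (odd_outside E a) = 2 ^ (card E - 1)"
proof -
  have "\<not> E \<subseteq> {a}" using assms(2) card_mono[of "{a}" E] by auto
  then obtain b where b: "b \<in> E" "b \<noteq> a" by blast
  let ?toggle = "\<lambda>X. symdiff X {b}"
  have parity: "even (card (?toggle X - {a})) \<longleftrightarrow> odd (card (X - {a}))" if "X \<subseteq> E" for X
    using even_card_symdiff_singleton_Diff[OF _ b(2)] that assms(1) finite_subset by blast
  have closed: "?toggle X \<subseteq> E" if "X \<subseteq> E" for X
    using symdiff_subset[OF that] b(1) by blast
  have even_to_odd: "?toggle ` even_outside E a \<subseteq> Pow E - even_outside E a"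
    using parity closed by (auto simp: even_outside_def)
  then have "2 * card (even_outside E a) \<le> 2 ^ card E"
    using double_card_le_if_inj_into_Diff[OF _ even_outside_subset_Pow inj_on_symdiff_singleton even_to_odd]
      assms(1) by (simp add: card_Pow)
  moreover have odd_to_even: "?toggle ` odd_outside E a \<subseteq> Pow E - odd_outside E a"
    using parity closed by (auto simp: odd_outside_def)
  then have "2 * card (odd_outside E a) \<le> 2 ^ card E"
    using double_card_le_if_inj_into_Diff[OF _ odd_outside_subset_Pow inj_on_symdiff_singleton odd_to_even]
      assms(1) by (simp add: card_Pow)
  moreover have "card (even_outside E a) + card (odd_outside E a) = 2 ^ card E"
  proof -
    have "even_outside E a \<union> odd_outside E a = Pow E" "even_outside E a \<inter> odd_outside E a = {}"
      by (auto simp: even_outside_def odd_outside_def)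
    then show ?thesis
      using card_Un_disjoint[of "even_outside E a" "odd_outside E a"] assms(1)
      by (simp add: card_Pow finite_subset[OF even_outside_subset_Pow]
          finite_subset[OF odd_outside_subset_Pow])
  qed
  moreover have "(2::nat) ^ card E = 2 * 2 ^ (card E - 1)"
    using assms(2) by (simp add: power_Suc[symmetric])
  ultimately show ?thesis by linarith
qed

lemma card_odd_outside_Int:
  assumes "finite E" "a \<in> E" "a \<noteq> b"
  shows "2 * card (odd_outside E a \<inter> odd_outside E b) \<le> card (odd_outside E a)"
proof -
  have fin: "finite (odd_outside E a)"
    using finite_subset[OF odd_outside_subset_Pow] assms(1) by simp
  have "symdiff X {a} \<in> odd_outside E a - odd_outside E b"
    if "X \<in> odd_outside E a \<inter> odd_outside E b" for X
  proof -
    have X: "X \<subseteq> E" "odd (card (X - {a}))" "odd (card (X - {b}))"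
      using that by (auto simp: odd_outside_def)
    have "finite X" using X(1) assms(1) by (rule finite_subset)
    \<comment> \<open>toggling \<open>a\<close> keeps the parity outside \<open>a\<close> and flips the parity outside \<open>b\<close>\<close>
    have "symdiff X {a} - {a} = X - {a}" by (auto simp: symdiff_def)
    moreover have "even (card (symdiff X {a} - {b}))"
      using even_card_symdiff_singleton_Diff[OF \<open>finite X\<close> assms(3)] X(3) by simp
    moreover have "symdiff X {a} \<subseteq> E" using symdiff_subset[OF X(1)] assms(2) by blast
    ultimately show ?thesis using X(2) by (simp add: odd_outside_def)
  qed
  then have toggle: "(\<lambda>X. symdiff X {a}) ` (odd_outside E a \<inter> odd_outside E b)
      \<subseteq> odd_outside E a - odd_outside E a \<inter> odd_outside E b" by blast
  show ?thesis
    by (rule double_card_le_if_inj_into_Diff[OF fin _ inj_on_symdiff_singleton toggle]) blast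
qed

lemma card_UN_ge_Bonferroni:
  assumes "finite I" "\<And>i. i \<in> I \<Longrightarrow> finite (S i)"
  shows "(\<Sum>i\<in>I. real (card (S i)) - (\<Sum>j\<in>I - {i}. real (card (S i \<inter> S j))))
    \<le> real (card (\<Union>i\<in>I. S i))"
proof -
  define T where "T i = S i - (\<Union>j\<in>I - {i}. S i \<inter> S j)" for i
  have card_T: "real (card (S i)) - (\<Sum>j\<in>I - {i}. real (card (S i \<inter> S j))) \<le> real (card (T i))"
    if "i \<in> I" for i
  proof -
    have fin: "finite (\<Union>j\<in>I - {i}. S i \<inter> S j)" using assms that by auto
    have "card (\<Union>j\<in>I - {i}. S i \<inter> S j) \<le> (\<Sum>j\<in>I - {i}. card (S i \<inter> S j))"
      using assms(1) by (intro card_UN_le) simp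
    moreover have "card (S i) - card (\<Union>j\<in>I - {i}. S i \<inter> S j) \<le> card (T i)"
      unfolding T_def using fin by (rule diff_card_le_card_Diff)
    ultimately show ?thesis by (simp add: of_nat_sum[symmetric] del: of_nat_sum)
  qed
  have "card (\<Union>i\<in>I. T i) = (\<Sum>i\<in>I. card (T i))"
    using assms by (intro card_UN_disjoint) (auto simp: T_def)
  moreover have "card (\<Union>i\<in>I. T i) \<le> card (\<Union>i\<in>I. S i)"
    using assms by (intro card_mono) (auto simp: T_def)
  ultimately show ?thesis
    using sum_mono[of I _ "\<lambda>i. real (card (T i))", OF card_T]
    by (simp add: of_nat_sum[symmetric] del: of_nat_sum)
qed

definition above_even_outside :: "'a set \<Rightarrow> 'a \<Rightarrow> 'a set set set" where
  "above_even_outside E a = {F. even_outside E a \<subseteq> F \<and> F \<subseteq> Pow E}"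

lemma finite_above_even_outside: "finite E \<Longrightarrow> finite (above_even_outside E a)"
  by (rule finite_subset[of _ "Pow (Pow E)"]) (auto simp: above_even_outside_def)

lemma card_above_even_outside_Int:
  assumes "finite E"
  shows "card (above_even_outside E a \<inter> above_even_outside E b)
    = 2 ^ card (odd_outside E a \<inter> odd_outside E b)"
proof -
  let ?A = "even_outside E a \<union> even_outside E b"
  have "above_even_outside E a \<inter> above_even_outside E b = {F. ?A \<subseteq> F \<and> F \<subseteq> Pow E}"
    by (auto simp: above_even_outside_def)
  moreover have "card {F. ?A \<subseteq> F \<and> F \<subseteq> Pow E} = 2 ^ card (Pow E - ?A)"
    using assms by (intro card_supersets_within) (auto simp: even_outside_def)
  moreover have "Pow E - ?A = odd_outside E a \<inter> odd_outside E b"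
    by (simp add: Diff_Un Pow_diff_even_outside)
  ultimately show ?thesis by (simp only:)
qed

lemma card_above_even_outside:
  assumes "finite E" "2 \<le> card E"
  shows "card (above_even_outside E a) = 2 ^ 2 ^ (card E - 1)"
  using card_above_even_outside_Int[OF assms(1), of a a] card_odd_outside[OF assms] by simp

lemma card_above_even_outside_Int_le:
  assumes "finite E" "2 \<le> card E" "a \<in> E" "a \<noteq> b"
  shows "card (above_even_outside E a \<inter> above_even_outside E b) \<le> 2 ^ 2 ^ (card E - 2)"
proof -
  have "2 * card (odd_outside E a \<inter> odd_outside E b) \<le> 2 * 2 ^ (card E - 2)"
    using card_odd_outside_Int[OF assms(1,3,4)] card_odd_outside[OF assms(1,2)] assms(2)
    by (simp add: power_Suc[symmetric] Suc_diff_Suc numeral_2_eq_2)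
  then show ?thesis
    unfolding card_above_even_outside_Int[OF assms(1)] by (simp add: power_increasing)
qed

lemma card_delta_matroids_ge:
  assumes "finite E" "card E = n" "2 \<le> n"
  shows "real n * (2 ^ 2 ^ (n - 1) - real (n - 1) * 2 ^ 2 ^ (n - 2))
    \<le> real (card {F. F \<subseteq> Pow E \<and> delta_matroid E F})"
proof -
  let ?Fam = "above_even_outside E"
  have "real n * (2 ^ 2 ^ (n - 1) - real (n - 1) * 2 ^ 2 ^ (n - 2))
      = (\<Sum>a\<in>E. 2 ^ 2 ^ (n - 1) - (\<Sum>b\<in>E - {a}. 2 ^ 2 ^ (n - 2)))"
    using assms(1,2) by simp
  also have "\<dots> \<le> (\<Sum>a\<in>E. real (card (?Fam a)) - (\<Sum>b\<in>E - {a}. real (card (?Fam a \<inter> ?Fam b))))"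
  proof (rule sum_mono, rule diff_mono)
    fix a assume a: "a \<in> E"
    show "2 ^ 2 ^ (n - 1) \<le> real (card (?Fam a))"
      using card_above_even_outside[OF assms(1)] assms by simp
    show "(\<Sum>b\<in>E - {a}. real (card (?Fam a \<inter> ?Fam b))) \<le> (\<Sum>b\<in>E - {a}. 2 ^ 2 ^ (n - 2))"
    proof (rule sum_mono)
      fix b assume "b \<in> E - {a}"
      then have "card (?Fam a \<inter> ?Fam b) \<le> 2 ^ 2 ^ (n - 2)"
        using card_above_even_outside_Int_le[OF assms(1) _ a, of b] assms(2,3) by auto
      then show "real (card (?Fam a \<inter> ?Fam b)) \<le> 2 ^ 2 ^ (n - 2)"
        by (metis of_nat_le_iff of_nat_numeral of_nat_power)
    qed
  qed
  also have "\<dots> \<le> real (card (\<Union>a\<in>E. ?Fam a))"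
    using assms(1) by (intro card_UN_ge_Bonferroni finite_above_even_outside)
  also have "\<dots> \<le> real (card {F. F \<subseteq> Pow E \<and> delta_matroid E F})"
  proof (intro of_nat_mono card_mono)
    show "finite {F. F \<subseteq> Pow E \<and> delta_matroid E F}"
      by (rule finite_subset[of _ "Pow (Pow E)"]) (use assms(1) in auto)
    show "(\<Union>a\<in>E. ?Fam a) \<subseteq> {F. F \<subseteq> Pow E \<and> delta_matroid E F}"
      using assms(1) delta_matroid_if_even_outside_subset by (auto simp: above_even_outside_def)
  qed
  finally show ?thesis .
qed

lemma Suc_square_le_double_exp: "(m + 1) ^ 2 \<le> (2::nat) ^ 2 ^ m"
proof -
  have "2 * m \<le> 2 ^ m"
  proof (cases m)
    case (Suc k)
    have "k + 1 \<le> 2 ^ k" using less_exp[of k] by (simp add: Suc_le_eq)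
    then show ?thesis using Suc by simp
  qed simp
  have "(m + 1) ^ 2 \<le> (2 ^ m) ^ 2" by (intro power_mono) (simp_all add: Suc_le_eq)
  also have "\<dots> = 2 ^ (2 * m)" by (simp add: power_mult mult.commute)
  also have "\<dots> \<le> 2 ^ 2 ^ m" using \<open>2 * m \<le> 2 ^ m\<close> by (simp add: power_increasing)
  finally show ?thesis .
qed

lemma eventually_le_double_exp:
  fixes \<epsilon> :: real
  assumes "\<epsilon> > 0"
  shows "\<forall>\<^sub>F m in sequentially. real (m + 1) \<le> \<epsilon> * 2 ^ 2 ^ m"
proof -
  obtain N :: nat where "1 / \<epsilon> < N" using reals_Archimedean2 by blast
  have "real (m + 1) \<le> \<epsilon> * 2 ^ 2 ^ m" if "N \<le> m" for m
  proof -
    have "1 < \<epsilon> * N" using \<open>1 / \<epsilon> < N\<close> assms by (simp add: field_simps)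
    also have "\<dots> \<le> \<epsilon> * real (m + 1)" using that assms by simp
    finally have "1 \<le> \<epsilon> * real (m + 1)" by simp
    then have "real (m + 1) \<le> \<epsilon> * real (m + 1) * real (m + 1)"
      using mult_right_mono[of 1 _ "real (m + 1)"] by simp
    also have "\<dots> = \<epsilon> * real ((m + 1) ^ 2)"
      by (simp only: power2_eq_square of_nat_mult mult.assoc)
    also have "\<dots> \<le> \<epsilon> * 2 ^ 2 ^ m"
      using Suc_square_le_double_exp[of m] assms
      by (intro mult_left_mono) (metis of_nat_le_iff of_nat_numeral of_nat_power, simp)
    finally show ?thesis .
  qed
  then show ?thesis by (auto simp: eventually_sequentially)
qed

theorem theorem2:
  fixes \<epsilon> :: real
  assumes "\<epsilon> > 0"
  shows "\<exists>n0::nat. \<forall>n\<ge>n0.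
           real (num_delta_matroids n) \<ge> (1 - \<epsilon>) * real n * 2 ^ (2 ^ (n - 1))"
proof -
  obtain N where N: "\<And>m. N \<le> m \<Longrightarrow> real (m + 1) \<le> \<epsilon> * 2 ^ 2 ^ m"
    using eventually_le_double_exp[OF assms] by (auto simp: eventually_sequentially)
  show ?thesis
  proof (intro exI allI impI)
    fix n :: nat assume n: "N + 2 \<le> n"
    define K :: real where "K = 2 ^ 2 ^ (n - 2)"
    have small: "real (n - 1) * K \<le> \<epsilon> * K * K"
      using N[of "n - 2"] n by (intro mult_right_mono) (simp_all add: K_def Suc_diff_Suc numeral_2_eq_2)
    have "n - 1 = Suc (n - 2)" using n by simp
    then have double: "(2::real) ^ 2 ^ (n - 1) = K * K"
      by (simp add: K_def power_mult[symmetric] power2_eq_square[symmetric] mult.commute)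
    have "real n * (2 ^ 2 ^ (n - 1) - real (n - 1) * K) \<le> real (num_delta_matroids n)"
      using card_delta_matroids_ge[of "{1..n}" n] n unfolding num_delta_matroids_def K_def by simp
    moreover have "real n * (real (n - 1) * K) \<le> real n * (\<epsilon> * K * K)"
      using small by (rule mult_left_mono) simp
    ultimately show "(1 - \<epsilon>) * real n * 2 ^ 2 ^ (n - 1) \<le> real (num_delta_matroids n)"
      unfolding double by (simp add: algebra_simps)
  qed
qed

end
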